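(* Let $T=2^m$, $d\ge1$ and $u_{1:T}\in(\mathbb{R}^d)^T$, and let $P=\sum_{t=1}^{T-1}\|u_{t+1}-u_t\|_2$. Then for every scale $j^*\in[1:m]$, $P^{(j^* )}\le P$, where $P^{(j^* )}$ is defined in the context.
   Context: Haar features for $T=2^m$: for scale $j\in[1:m]$ and location $l\in[1:2^{-j}T]$, $h^{(j,l)}\in\mathbb{R}^T$ has $t$-th entry $1$ for $t\in[2^j(l-1)+1:2^j(l-1)+2^{j-1}]$, $-1$ for $t\in[2^j(l-1)+2^{j-1}+1:2^jl]$, and $0$ otherwise; normalized $\tilde h^{(j,l)}=2^{-j/2}h^{(j,l)}$. For $i\in[1:d]$, $u^{(i)}_{1:T}\in\mathbb{R}^T$ is the sequence of $i$-th coordinates of $u_1,\ldots,u_T$. Coefficient $\hat u^{(j,l)}\in\mathbb{R}^d$ has $i$-th entry $\langle\tilde h^{(j,l)},u^{(i)}_{1:T}\rangle$. Detail sequences: $z^{(j,l)}_t=\hat u^{(j,l)}\tilde h^{(j,l)}_t\in\mathbb{R}^d$. Path length of the $(j,l)$ detail within its support: $P^{(j,l)}=\sum_{t=2^j(l-1)+1}^{2^jl-1}\|z^{(j,l)}_{t+1}-z^{(j,l)}_t\|_2$, and $P^{(j)}=\sum_l P^{(j,l)}$. *)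

theory Defs
  imports "HOL-Analysis.Analysis"
begin

definition haar :: "nat \<Rightarrow> nat \<Rightarrow> nat \<Rightarrow> real" where
  "haar j l t =
     (if 2^j*(l-1)+1 \<le> t \<and> t \<le> 2^j*(l-1) + 2^(j-1) then 1
      else if 2^j*(l-1) + 2^(j-1) + 1 \<le> t \<and> t \<le> 2^j*l then -1
      else 0)"

definition haar_n :: "nat \<Rightarrow> nat \<Rightarrow> nat \<Rightarrow> real" where
  "haar_n j l t = 2 powr (- real j / 2) * haar j l t"

definition haar_coeff :: "nat \<Rightarrow> (nat \<Rightarrow> real^'d) \<Rightarrow> nat \<Rightarrow> nat \<Rightarrow> real^'d" where
  "haar_coeff T u j l = (\<chi> i. \<Sum>t=1..T. haar_n j l t * (u t $ i))"

definition detail :: "nat \<Rightarrow> (nat \<Rightarrow> real^'d) \<Rightarrow> nat \<Rightarrow> nat \<Rightarrow> nat \<Rightarrow> real^'d" where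
  "detail T u j l t = haar_n j l t *\<^sub>R haar_coeff T u j l"

definition path_jl :: "nat \<Rightarrow> (nat \<Rightarrow> real^'d) \<Rightarrow> nat \<Rightarrow> nat \<Rightarrow> real" where
  "path_jl T u j l =
     (\<Sum>t = 2^j*(l-1)+1 .. 2^j*l - 1. norm (detail T u j l (t+1) - detail T u j l t))"

definition path_j :: "nat \<Rightarrow> (nat \<Rightarrow> real^'d) \<Rightarrow> nat \<Rightarrow> real" where
  "path_j T u j = (\<Sum>l=1..T div 2^j. path_jl T u j l)"

definition path_len :: "nat \<Rightarrow> (nat \<Rightarrow> real^'d) \<Rightarrow> real" where
  "path_len T u = (\<Sum>t=1..T-1. norm (u (t+1) - u t))"

end

theory Submission
  imports Defs
begin

text \<open>On its support, the detail z^(j,l) is a step function equal to c on the first half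
  of the block and to -c on the second, so P^(j,l) is the single jump 2|c|. Unfolding the
  normalisations, this is 2^(1-j) |sum_k (u_(a+k) - u_(a+h+k))| with h = 2^(j-1), and each of
  these h differences is bounded by the path length of u over the block. Summing over the
  disjoint blocks gives P^(j) <= P.\<close>

lemma norm_diff_le_sum_norm_steps:
  fixes u :: "nat \<Rightarrow> 'a::real_normed_vector"
  shows "norm (u (b + h) - u b) \<le> (\<Sum>s = b..<b + h. norm (u (s + 1) - u s))"
proof (induction h)
  case 0
  then show ?case by simp
next
  case (Suc h)
  have "norm (u (b + Suc h) - u b) \<le> norm (u (b + h + 1) - u (b + h)) + norm (u (b + h) - u b)"
    using norm_triangle_ineq[of "u (b + h + 1) - u (b + h)" "u (b + h) - u b"] by simp
  with Suc show ?case by simp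
qed

lemma sum_blocks_le_sum:
  fixes D :: "nat \<Rightarrow> real"
  assumes "\<And>s. D s \<ge> 0"
  shows "(\<Sum>l = 1..L. \<Sum>s = n * (l - 1) + 1..<n * l. D s) \<le> (\<Sum>s = 1..<n * L. D s)"
proof (induction L)
  case 0
  then show ?case by simp
next
  case (Suc L)
  have "(\<Sum>l = 1..Suc L. \<Sum>s = n * (l - 1) + 1..<n * l. D s)
      \<le> (\<Sum>s = 1..<n * L. D s) + (\<Sum>s = n * L + 1..<n * Suc L. D s)"
    using Suc by simp
  also have "\<dots> = (\<Sum>s \<in> {1..<n * L} \<union> {n * L + 1..<n * Suc L}. D s)"
    by (rule sum.union_disjoint[symmetric]) auto
  also have "\<dots> \<le> (\<Sum>s = 1..<n * Suc L. D s)"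
    by (rule sum_mono2) (auto simp: assms)
  finally show ?case .
qed

lemma two_power_eq_double_half:
  assumes "j \<ge> 1"
  shows "(2::'a::comm_semiring_1) ^ j = 2 * 2 ^ (j - 1)"
  using assms by (metis One_nat_def Suc_pred less_eq_Suc_le power_Suc)

lemma haar_block_end:
  assumes "j \<ge> 1" and "l \<ge> 1"
  shows "(2::nat) ^ j * l = 2 ^ j * (l - 1) + 2 * 2 ^ (j - 1)"
  using assms two_power_eq_double_half[OF assms(1), where 'a = nat]
  by (metis add.commute le_add_diff_inverse mult_Suc_right plus_1_eq_Suc)

lemma haar_eq_halves:
  assumes "j \<ge> 1" and "l \<ge> 1"
  defines "a \<equiv> 2 ^ j * (l - 1)" and "h \<equiv> 2 ^ (j - 1)"
  shows "haar j l t =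
    (if a < t \<and> t \<le> a + h then 1 else if a + h < t \<and> t \<le> a + 2 * h then -1 else 0)"
  unfolding haar_def haar_block_end[OF assms(1,2)] a_def[symmetric] h_def[symmetric] by simp

lemma haar_sum_eq_sum_halves_diff:
  fixes u :: "nat \<Rightarrow> 'a::real_vector"
  assumes j: "j \<ge> 1" and l: "l \<ge> 1" and T: "2 ^ j * l \<le> T"
  defines "a \<equiv> 2 ^ j * (l - 1)" and "h \<equiv> 2 ^ (j - 1)"
  shows "(\<Sum>t = 1..T. haar j l t *\<^sub>R u t) = (\<Sum>k = 1..h. u (a + k) - u (a + h + k))"
proof -
  have block_end: "2 ^ j * l = a + 2 * h"
    unfolding a_def h_def by (rule haar_block_end[OF j l])
  have "(\<Sum>t = 1..T. haar j l t *\<^sub>R u t) = (\<Sum>t = 1..T.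
      (if t \<in> {a + 1..a + h} then u t else 0) - (if t \<in> {a + h + 1..a + 2 * h} then u t else 0))"
    by (rule sum.cong) (auto simp: haar_eq_halves[OF j l] a_def h_def)
  also have "\<dots> = sum u ({1..T} \<inter> {a + 1..a + h}) - sum u ({1..T} \<inter> {a + h + 1..a + 2 * h})"
    by (simp only: sum_subtractf sum.inter_restrict[OF finite_atLeastAtMost])
  also have "{1..T} \<inter> {a + 1..a + h} = {a + 1..a + h}"
    using T block_end by auto
  also have "{1..T} \<inter> {a + h + 1..a + 2 * h} = {a + h + 1..a + 2 * h}"
    using T block_end by auto
  also have "sum u {a + 1..a + h} = (\<Sum>k = 1..h. u (a + k))"
    using sum.shift_bounds_cl_nat_ivl[of u 1 a h] by (simp add: add.commute)
  also have "sum u {a + h + 1..a + 2 * h} = (\<Sum>k = 1..h. u (a + h + k))"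
    using sum.shift_bounds_cl_nat_ivl[of u 1 "a + h" h] by (simp add: add.commute add.left_commute mult_2)
  finally show ?thesis
    by (simp add: sum_subtractf)
qed

lemma norm_haar_sum_le_block_path:
  fixes u :: "nat \<Rightarrow> 'a::real_normed_vector"
  assumes j: "j \<ge> 1" and l: "l \<ge> 1" and T: "2 ^ j * l \<le> T"
  shows "norm (\<Sum>t = 1..T. haar j l t *\<^sub>R u t)
    \<le> 2 ^ (j - 1) * (\<Sum>s = 2 ^ j * (l - 1) + 1..<2 ^ j * l. norm (u (s + 1) - u s))"
proof -
  define a where "a = (2::nat) ^ j * (l - 1)"
  define h where "h = (2::nat) ^ (j - 1)"
  define W where "W = (\<Sum>s = a + 1..<a + 2 * h. norm (u (s + 1) - u s))"
  have "norm (\<Sum>t = 1..T. haar j l t *\<^sub>R u t) = norm (\<Sum>k = 1..h. u (a + k) - u (a + h + k))"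
    unfolding haar_sum_eq_sum_halves_diff[OF j l T] a_def h_def ..
  also have "\<dots> \<le> (\<Sum>k = 1..h. norm (u (a + k) - u (a + h + k)))"
    by (rule norm_sum)
  also have "\<dots> \<le> (\<Sum>k = 1..h. W)"
  proof (rule sum_mono)
    fix k
    assume k: "k \<in> {1..h}"
    have "norm (u (a + k) - u (a + h + k)) = norm (u (a + k + h) - u (a + k))"
      by (simp add: norm_minus_commute add.commute add.left_commute)
    also have "\<dots> \<le> (\<Sum>s = a + k..<a + k + h. norm (u (s + 1) - u s))"
      by (rule norm_diff_le_sum_norm_steps)
    also have "\<dots> \<le> W"
      unfolding W_def by (rule sum_mono2) (use k in auto)
    finally show "norm (u (a + k) - u (a + h + k)) \<le> W" .
  qed
  also have "\<dots> = 2 ^ (j - 1) * W"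
    by (simp add: h_def)
  finally show ?thesis
    unfolding W_def a_def h_def haar_block_end[OF j l] .
qed

lemma path_jl_eq_norm_haar_sum:
  fixes u :: "nat \<Rightarrow> real^'d"
  assumes j: "j \<ge> 1" and l: "l \<ge> 1"
  shows "path_jl T u j l = norm (\<Sum>t = 1..T. haar j l t *\<^sub>R u t) / 2 ^ (j - 1)"
proof -
  define a where "a = (2::nat) ^ j * (l - 1)"
  define h where "h = (2::nat) ^ (j - 1)"
  define sc where "sc = (2::real) powr (- real j / 2)"
  define c where "c = haar_coeff T u j l"
  have h_pos: "h \<ge> 1"
    unfolding h_def by simp
  have jump: "norm (detail T u j l (t + 1) - detail T u j l t) = (if t = a + h then 2 * sc * norm c else 0)"
    if "a + 1 \<le> t" "t \<le> a + 2 * h - 1" for t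
  proof -
    have "haar j l (t + 1) - haar j l t = (if t = a + h then -2 else 0)"
      using that h_pos unfolding haar_eq_halves[OF j l] a_def[symmetric] h_def[symmetric] by auto
    moreover have "detail T u j l (t + 1) - detail T u j l t = (sc * (haar j l (t + 1) - haar j l t)) *\<^sub>R c"
      unfolding detail_def haar_n_def c_def sc_def by (simp add: algebra_simps)
    moreover have "sc > 0"
      unfolding sc_def by simp
    ultimately show ?thesis
      by auto
  qed
  have "path_jl T u j l = (\<Sum>t = a + 1..a + 2 * h - 1. if t = a + h then 2 * sc * norm c else 0)"
    unfolding path_jl_def haar_block_end[OF j l] a_def[symmetric] h_def[symmetric]
    by (intro sum.cong refl jump) auto
  also have "\<dots> = 2 * sc * norm c"
    using h_pos by simp
  also have "c = sc *\<^sub>R (\<Sum>t = 1..T. haar j l t *\<^sub>R u t)"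
    unfolding c_def haar_coeff_def haar_n_def sc_def
    by (simp add: vec_eq_iff sum_distrib_left mult.assoc)
  also have "2 * sc * norm (sc *\<^sub>R (\<Sum>t = 1..T. haar j l t *\<^sub>R u t))
      = 2 * sc\<^sup>2 * norm (\<Sum>t = 1..T. haar j l t *\<^sub>R u t)"
    by (simp add: sc_def power2_eq_square)
  also have "2 * sc\<^sup>2 = 1 / 2 ^ (j - 1)"
  proof -
    have "sc\<^sup>2 = 2 powr (- real j)"
      unfolding sc_def by (simp add: power2_eq_square powr_add[symmetric])
    also have "\<dots> = 1 / (2 * 2 ^ (j - 1))"
      by (simp add: powr_minus_divide powr_realpow two_power_eq_double_half[OF j])
    finally show ?thesis by simp
  qed
  finally show ?thesis
    by simp
qed

lemma path_jl_le_block_path: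
  fixes u :: "nat \<Rightarrow> real^'d"
  assumes j: "j \<ge> 1" and l: "l \<ge> 1" and T: "2 ^ j * l \<le> T"
  shows "path_jl T u j l \<le> (\<Sum>s = 2 ^ j * (l - 1) + 1..<2 ^ j * l. norm (u (s + 1) - u s))"
  using norm_haar_sum_le_block_path[OF j l T, of u]
  by (simp add: path_jl_eq_norm_haar_sum[OF j l] divide_le_eq mult.commute)

lemma path_j_le_path_len:
  fixes u :: "nat \<Rightarrow> real^'d"
  assumes j: "j \<ge> 1"
  shows "path_j T u j \<le> path_len T u"
proof -
  define n where "n = (2::nat) ^ j"
  define L where "L = T div n"
  have nL: "n * L \<le> T"
    unfolding L_def by simp
  have "path_j T u j = (\<Sum>l = 1..L. path_jl T u j l)"
    unfolding path_j_def L_def n_def ..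
  also have "\<dots> \<le> (\<Sum>l = 1..L. \<Sum>s = n * (l - 1) + 1..<n * l. norm (u (s + 1) - u s))"
  proof (rule sum_mono)
    fix l
    assume l: "l \<in> {1..L}"
    then have "n * l \<le> T"
      using nL by (meson atLeastAtMost_iff le_trans mult_le_mono2)
    with l show "path_jl T u j l \<le> (\<Sum>s = n * (l - 1) + 1..<n * l. norm (u (s + 1) - u s))"
      unfolding n_def by (intro path_jl_le_block_path j) auto
  qed
  also have "\<dots> \<le> (\<Sum>s = 1..<n * L. norm (u (s + 1) - u s))"
    by (rule sum_blocks_le_sum) simp
  also have "\<dots> \<le> (\<Sum>s = 1..T - 1. norm (u (s + 1) - u s))"
    by (rule sum_mono2) (use nL in auto)
  also have "\<dots> = path_len T u"
    unfolding path_len_def ..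
  finally show ?thesis .
qed

theorem lemma7:
  fixes m :: nat and T :: nat and u :: "nat \<Rightarrow> real^'d" and jstar :: nat
  assumes "T = 2^m"
    and "1 \<le> jstar" and "jstar \<le> m"
  shows "path_j T u jstar \<le> path_len T u"
  using path_j_le_path_len[OF assms(2)] .

end
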